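(* Let $\lambda$ be a non-uniform partition of $n$, and let $G\le\mathcal{S}_n$ be $\lambda$-homogeneous but not $\lambda$-transitive. Then $G$ is $2$-homogeneous, and hence primitive.
   Context: $\Omega=\{1,\ldots,n\}$. A partition of $n$ is a non-increasing sequence of positive integers with sum $n$; it is non-uniform if not all parts are equal. An ordered partition $(A_1,A_2,\ldots)$ of $\Omega$ has type $\lambda$ if $|A_i|=\lambda_i$. $G$ is $\lambda$-transitive if for any two ordered partitions $(A_i)$, $(B_i)$ of type $\lambda$ there is $g\in G$ with $A_ig=B_i$ for all $i$; $G$ is $\lambda$-homogeneous if for any two such ordered partitions there is $g\in G$ mapping the set of parts $\{A_1,A_2,\ldots\}$ onto $\{B_1,B_2,\ldots\}$. $G$ is $2$-homogeneous if it is transitive on $2$-subsets of $\Omega$. *)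

theory Defs
  imports "HOL-Algebra.Sym_Groups"
begin

definition is_partition :: "nat list \<Rightarrow> nat \<Rightarrow> bool" where
  "is_partition lam n \<longleftrightarrow> sorted_wrt (\<ge>) lam \<and> (\<forall>x\<in>set lam. 0 < x) \<and> sum_list lam = n"

definition non_uniform :: "nat list \<Rightarrow> bool" where
  "non_uniform lam \<longleftrightarrow> (\<exists>x\<in>set lam. \<exists>y\<in>set lam. x \<noteq> y)"

definition ordered_partition_of_type :: "nat \<Rightarrow> nat list \<Rightarrow> nat set list \<Rightarrow> bool" where
  "ordered_partition_of_type n lam As \<longleftrightarrow>
     length As = length lam \<and>
     (\<forall>i<length As. card (As ! i) = lam ! i) \<and>
     (\<forall>i<length As. \<forall>j<length As. i \<noteq> j \<longrightarrow> As ! i \<inter> As ! j = {}) \<and>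
     \<Union> (set As) = {1..n}"

definition lam_transitive :: "nat \<Rightarrow> nat list \<Rightarrow> (nat \<Rightarrow> nat) set \<Rightarrow> bool" where
  "lam_transitive n lam G \<longleftrightarrow>
     (\<forall>As Bs. ordered_partition_of_type n lam As \<longrightarrow> ordered_partition_of_type n lam Bs \<longrightarrow>
        (\<exists>g\<in>G. \<forall>i<length lam. g ` (As ! i) = Bs ! i))"

definition lam_homogeneous :: "nat \<Rightarrow> nat list \<Rightarrow> (nat \<Rightarrow> nat) set \<Rightarrow> bool" where
  "lam_homogeneous n lam G \<longleftrightarrow>
     (\<forall>As Bs. ordered_partition_of_type n lam As \<longrightarrow> ordered_partition_of_type n lam Bs \<longrightarrow>
        (\<exists>g\<in>G. (\<lambda>A. g ` A) ` set As = set Bs))"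

definition two_homogeneous :: "nat \<Rightarrow> (nat \<Rightarrow> nat) set \<Rightarrow> bool" where
  "two_homogeneous n G \<longleftrightarrow>
     (\<forall>X Y. X \<subseteq> {1..n} \<longrightarrow> Y \<subseteq> {1..n} \<longrightarrow> card X = 2 \<longrightarrow> card Y = 2 \<longrightarrow>
        (\<exists>g\<in>G. g ` X = Y))"

definition perm_transitive :: "nat \<Rightarrow> (nat \<Rightarrow> nat) set \<Rightarrow> bool" where
  "perm_transitive n G \<longleftrightarrow> (\<forall>x\<in>{1..n}. \<forall>y\<in>{1..n}. \<exists>g\<in>G. g x = y)"

definition is_block :: "nat \<Rightarrow> (nat \<Rightarrow> nat) set \<Rightarrow> nat set \<Rightarrow> bool" where
  "is_block n G B \<longleftrightarrow> B \<subseteq> {1..n} \<and> (\<forall>g\<in>G. g ` B = B \<or> g ` B \<inter> B = {})"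

definition primitive :: "nat \<Rightarrow> (nat \<Rightarrow> nat) set \<Rightarrow> bool" where
  "primitive n G \<longleftrightarrow> perm_transitive n G \<and>
     (\<forall>B. is_block n G B \<longrightarrow> card B \<le> 1 \<or> B = {1..n})"

end

theory Submission
  imports Defs
begin

text \<open>Let \<open>s\<close> be the largest part of \<open>\<lambda>\<close>. If \<open>G\<close> were not 2-homogeneous, some \<open>G\<close>-orbit \<open>\<Gamma>\<close>
of 2-sets would be neither empty nor complete. For an ordered partition of type \<open>\<lambda>\<close>, count the
edges of \<open>\<Gamma>\<close> lying inside parts of size \<open>s\<close>; by \<open>\<lambda>\<close>-homogeneity this number is the same for all
partitions of type \<open>\<lambda>\<close>. Exchanging a point of an \<open>s\<close>-part with a point of a part of a different
size (there is one, as \<open>\<lambda>\<close> is non-uniform) shows that for every \<open>(s - 1)\<close>-set \<open>T\<close> all points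
outside \<open>T\<close> have the same number of \<open>\<Gamma>\<close>-neighbours in \<open>T\<close>, and for \<open>2 \<le> s \<le> n - 2\<close> this forces
\<open>\<Gamma>\<close> to be empty or complete. The only other case, \<open>\<lambda> = (s, 1)\<close>, is excluded because there
\<open>\<lambda>\<close>-homogeneity already is \<open>\<lambda>\<close>-transitivity. Finally, 2-homogeneity implies primitivity once
\<open>n \<ge> 3\<close>.\<close>

definition ordered_partition :: "'a set \<Rightarrow> nat list \<Rightarrow> 'a set list \<Rightarrow> bool" where
  "ordered_partition S mu As \<longleftrightarrow>
     length As = length mu \<and>
     (\<forall>i<length As. card (As ! i) = mu ! i) \<and>
     (\<forall>i<length As. \<forall>j<length As. i \<noteq> j \<longrightarrow> As ! i \<inter> As ! j = {}) \<and>
     \<Union> (set As) = S"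

lemma ordered_partition_of_type_iff:
  "ordered_partition_of_type n lam As \<longleftrightarrow> ordered_partition {1..n} lam As"
  unfolding ordered_partition_of_type_def ordered_partition_def ..

lemma ordered_partition_part_subset:
  "ordered_partition S mu As \<Longrightarrow> Z \<in> set As \<Longrightarrow> Z \<subseteq> S"
  unfolding ordered_partition_def by blast

lemma ordered_partition_Cons:
  assumes P: "ordered_partition S mu Ds" and "X \<inter> S = {}" "card X = a"
  shows "ordered_partition (X \<union> S) (a # mu) (X # Ds)"
proof -
  have "X \<inter> Ds ! i = {}" if "i < length Ds" for i
    using ordered_partition_part_subset[OF P nth_mem[OF that]] assms(2) by blast
  then have "(X # Ds) ! i \<inter> (X # Ds) ! k = {}"
    if "i < length (X # Ds)" "k < length (X # Ds)" "i \<noteq> k" for i k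
    using that P unfolding ordered_partition_def
    by (cases i; cases k) (auto simp: Int_commute)
  then show ?thesis using P assms(3) unfolding ordered_partition_def
    by (simp add: nth_Cons split: nat.split)
qed

lemma ordered_partition_exists:
  "finite S \<Longrightarrow> card S = sum_list mu \<Longrightarrow> \<exists>As. ordered_partition S mu As"
proof (induction mu arbitrary: S)
  case Nil
  then show ?case by (auto simp: ordered_partition_def)
next
  case (Cons a mu)
  then obtain A where A: "A \<subseteq> S" "card A = a"
    by (metis le_add1 obtain_subset_with_card_n sum_list.Cons)
  with Cons.prems have "card (S - A) = sum_list mu"
    by (simp add: card_Diff_subset finite_subset)
  with Cons obtain As where "ordered_partition (S - A) mu As" by blast
  with A have "ordered_partition (A \<union> (S - A)) (a # mu) (A # As)"
    by (intro ordered_partition_Cons) auto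
  with A show ?case by (metis Un_Diff_cancel sup.absorb2)
qed

lemma ordered_partition_insert:
  assumes P: "ordered_partition S mu Ds" and "finite S" "j < length mu" "v \<notin> S"
  shows "ordered_partition (insert v S) (mu[j := mu ! j + 1]) (Ds[j := insert v (Ds ! j)])"
proof -
  have len: "length Ds = length mu" using P by (simp add: ordered_partition_def)
  have sub: "Ds ! i \<subseteq> S" if "i < length Ds" for i
    using ordered_partition_part_subset[OF P nth_mem[OF that]] .
  then have fin: "finite (Ds ! i)" and new: "v \<notin> Ds ! i" if "i < length Ds" for i
    using that assms(2,4) finite_subset by blast+
  have "\<Union> (set (Ds[j := insert v (Ds ! j)])) = insert v (\<Union> (set Ds))"
    using len assms(3) by (auto simp: set_conv_nth nth_list_update split: if_splits)
  with P len assms(3) fin new show ?thesis unfolding ordered_partition_def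
    by (auto simp: nth_list_update)
qed

lemma ordered_partition_Cons_disjoint:
  assumes "ordered_partition S mu (X # L)" "Z \<in> set L"
  shows "X \<inter> Z = {}"
proof -
  obtain i where "i < length L" "Z = L ! i" using assms(2) by (auto simp: in_set_conv_nth)
  with assms(1) show ?thesis unfolding ordered_partition_def
    by (metis Suc_less_eq length_Cons nat.distinct(1) nth_Cons_0 nth_Cons_Suc zero_less_Suc)
qed

lemma ordered_partition_card_insert_part:
  assumes "ordered_partition W mu Ds" "finite W" "j < length Ds" "w \<notin> W"
  shows "card (insert w (Ds ! j)) = Suc (mu ! j)"
proof -
  have "Ds ! j \<subseteq> W" using ordered_partition_part_subset[OF assms(1) nth_mem[OF assms(3)]] .
  then show ?thesis using assms finite_subset by (fastforce simp: ordered_partition_def)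
qed

lemma ordered_partition_Cons_insert:
  assumes "ordered_partition W (rest[j := rest ! j - 1]) Ds" "finite W"
    and "j < length rest" "0 < rest ! j" "w \<notin> W" "X \<inter> insert w W = {}" "card X = s"
  shows "ordered_partition (X \<union> insert w W) (s # rest) (X # Ds[j := insert w (Ds ! j)])"
proof -
  have "rest[j := rest ! j - 1, j := rest[j := rest ! j - 1] ! j + 1] = rest" using assms(3,4) by simp
  then have "ordered_partition (insert w W) rest (Ds[j := insert w (Ds ! j)])"
    using ordered_partition_insert[OF assms(1,2) _ assms(5), of j] assms(3) by simp
  then show ?thesis using ordered_partition_Cons assms(6,7) by blast
qed

definition edges_within :: "'a set set \<Rightarrow> 'a set \<Rightarrow> 'a set set" where
  "edges_within E X = {e \<in> E. e \<subseteq> X}"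

definition edges_in_parts :: "'a set set \<Rightarrow> nat \<Rightarrow> 'a set list \<Rightarrow> 'a set set" where
  "edges_in_parts E s As = {e \<in> E. \<exists>Z\<in>set As. card Z = s \<and> e \<subseteq> Z}"

definition degree_in :: "'a set set \<Rightarrow> 'a set \<Rightarrow> 'a \<Rightarrow> nat" where
  "degree_in E T u = card {t \<in> T. {u, t} \<in> E}"

lemma card_edges_within_insert:
  assumes "u \<notin> T" "finite T" "\<forall>e\<in>E. card e = 2"
  shows "card (edges_within E (insert u T)) = card (edges_within E T) + degree_in E T u"
proof -
  let ?N = "{t \<in> T. {u, t} \<in> E}"
  have "e \<in> edges_within E T \<union> (\<lambda>t. {u, t}) ` ?N" if e: "e \<in> edges_within E (insert u T)" for e
  proof (cases "u \<in> e")
    case True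
    moreover obtain a b where "e = {a, b}" "a \<noteq> b"
      using e assms(3) card_2_iff by (metis (no_types, lifting) edges_within_def mem_Collect_eq)
    ultimately obtain t where "e = {u, t}" "t \<noteq> u" by auto
    with e show ?thesis unfolding edges_within_def by auto
  qed (use e in \<open>auto simp: edges_within_def\<close>)
  then have split: "edges_within E (insert u T) = edges_within E T \<union> (\<lambda>t. {u, t}) ` ?N"
    by (auto simp: edges_within_def)
  have "finite (edges_within E T)"
    using assms(2) by (auto simp: edges_within_def intro: finite_subset[of _ "Pow T"])
  moreover have "edges_within E T \<inter> (\<lambda>t. {u, t}) ` ?N = {}"
    using assms(1) by (auto simp: edges_within_def)
  moreover have "inj_on (\<lambda>t. {u, t}) ?N"
    using assms(1) by (auto simp: inj_on_def doubleton_eq_iff)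
  ultimately show ?thesis
    using assms(2) unfolding split degree_in_def by (simp add: card_Un_disjoint card_image)
qed

lemma degree_in_insert:
  assumes "w \<notin> B" "finite B"
  shows "degree_in E (insert w B) u = degree_in E B u + (if {u, w} \<in> E then 1 else 0)"
proof -
  have "{t \<in> insert w B. {u, t} \<in> E} =
        (if {u, w} \<in> E then insert w {t \<in> B. {u, t} \<in> E} else {t \<in> B. {u, t} \<in> E})"
    by auto
  then show ?thesis using assms unfolding degree_in_def by auto
qed

lemma edge_extends_of_equal_degrees:
  assumes equal: "\<And>T u v. T \<subseteq> V \<Longrightarrow> card T = s - 1 \<Longrightarrow> u \<in> V - T \<Longrightarrow> v \<in> V - T \<Longrightarrow>
                    degree_in E T u = degree_in E T v"
    and V: "finite V" "2 \<le> s" "s + 2 \<le> card V"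
    and xyz: "x \<in> V" "y \<in> V" "z \<in> V" "x \<noteq> y" "x \<noteq> z" "y \<noteq> z"
    and xy: "{x, y} \<in> E"
  shows "{x, z} \<in> E"
proof (rule ccontr)
  assume xz: "{x, z} \<notin> E"
  have "s - 1 \<le> card (V - {x, y, z})" using V xyz by (simp add: card_Diff_subset)
  then obtain A where A: "A \<subseteq> V - {x, y, z}" "card A = s - 1"
    using obtain_subset_with_card_n by metis
  have finA: "finite A" using A(1) V(1) finite_subset by blast
  have yz: "degree_in E A y = degree_in E A z" using equal[OF _ A(2)] A(1) xyz by auto
  txt \<open>Exchanging any point of \<open>A\<close> for \<open>x\<close> shows that \<open>y\<close> is joined to all of \<open>A\<close> and \<open>z\<close> to none.\<close>
  have "{y, a} \<in> E \<and> {z, a} \<notin> E" if a: "a \<in> A" for a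
  proof -
    let ?B = "A - {a}"
    have B: "finite ?B" "a \<notin> ?B" "x \<notin> ?B" "A = insert a ?B" using finA a A(1) by auto
    have "card (insert x ?B) = s - 1" using B a A(2) V(2) by (simp add: card_Diff_singleton)
    then have "degree_in E (insert x ?B) y = degree_in E (insert x ?B) z"
      using equal[of "insert x ?B"] A(1) a xyz by auto
    then have "degree_in E ?B y + 1 = degree_in E ?B z"
      using xy xz B by (simp add: degree_in_insert insert_commute)
    moreover have "degree_in E ?B y + (if {y, a} \<in> E then 1 else 0) =
                   degree_in E ?B z + (if {z, a} \<in> E then 1 else 0)"
      using yz B by (metis degree_in_insert)
    ultimately show ?thesis by (auto split: if_splits)
  qed
  then have "{t \<in> A. {y, t} \<in> E} = A" "{t \<in> A. {z, t} \<in> E} = {}" by auto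
  then have "degree_in E A y = s - 1" "degree_in E A z = 0"
    using A(2) unfolding degree_in_def by (simp_all only: card.empty)
  then show False using yz V(2) by simp
qed

lemma edge_set_complete_of_equal_degrees:
  assumes equal: "\<And>T u v. T \<subseteq> V \<Longrightarrow> card T = s - 1 \<Longrightarrow> u \<in> V - T \<Longrightarrow> v \<in> V - T \<Longrightarrow>
                    degree_in E T u = degree_in E T v"
    and V: "finite V" "2 \<le> s" "s + 2 \<le> card V"
    and ab: "{a, b} \<in> E" "a \<noteq> b" "a \<in> V" "b \<in> V"
    and cd: "c \<noteq> d" "c \<in> V" "d \<in> V"
  shows "{c, d} \<in> E"
proof -
  have from_a: "{a, w} \<in> E" if "w \<in> V" "w \<noteq> a" for w
    using ab that edge_extends_of_equal_degrees[OF equal V, of a b w] by (cases "w = b") auto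
  show ?thesis
  proof (cases "c = a")
    case True
    with from_a cd show ?thesis by auto
  next
    case False
    then have "{c, a} \<in> E" using from_a cd by (metis insert_commute)
    then show ?thesis
      using edge_extends_of_equal_degrees[OF equal V, of c a d] False ab cd by (cases "d = a") auto
  qed
qed

lemma card_edges_in_parts_Cons:
  assumes P: "ordered_partition S mu (X # L)" and "card X = s" "finite E" "{} \<notin> E"
  shows "card (edges_in_parts E s (X # L)) = card (edges_within E X) + card (edges_in_parts E s L)"
proof -
  have "edges_in_parts E s (X # L) = edges_within E X \<union> edges_in_parts E s L"
    using assms(2) unfolding edges_in_parts_def edges_within_def by auto
  moreover have "edges_within E X \<inter> edges_in_parts E s L = {}"
  proof -
    have "e = {}" if "e \<subseteq> X" "e \<subseteq> Z" "Z \<in> set L" for e Z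
      using ordered_partition_Cons_disjoint[OF P that(3)] that(1,2) by blast
    then show ?thesis using assms(4) unfolding edges_in_parts_def edges_within_def by blast
  qed
  ultimately show ?thesis
    using assms(3) by (simp add: card_Un_disjoint edges_within_def edges_in_parts_def)
qed

lemma edges_in_parts_update_other_size:
  assumes "j < length L" "card Y \<noteq> s" "card Y' \<noteq> s"
  shows "edges_in_parts E s (L[j := Y]) = edges_in_parts E s (L[j := Y'])"
  using assms by (auto simp: edges_in_parts_def set_conv_nth nth_list_update)

lemma card_edges_within_exchange:
  assumes count: "\<And>As Bs. ordered_partition S (s # rest) As \<Longrightarrow> ordered_partition S (s # rest) Bs \<Longrightarrow>
                    card (edges_in_parts E s As) = card (edges_in_parts E s Bs)"
    and E: "finite E" "{} \<notin> E"
    and part: "j < length rest" "rest ! j \<noteq> s" "0 < rest ! j"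
    and S: "finite S" "card S = sum_list (s # rest)"
    and T: "T \<subseteq> S" "card T = s - 1" "1 \<le> s"
    and uv: "u \<in> S - T" "v \<in> S - T" "u \<noteq> v"
  shows "card (edges_within E (insert u T)) = card (edges_within E (insert v T))"
proof -
  define W where "W = S - insert u (insert v T)"
  have finT: "finite T" using T(1) S(1) finite_subset by blast
  have "card W = card S - (s + 1)"
    using uv T finT unfolding W_def by (simp add: card_Diff_subset)
  also have "\<dots> = sum_list (rest[j := rest ! j - 1])"
    using S(2) part by (simp add: sum_list_update)
  finally obtain Ds where Ds: "ordered_partition W (rest[j := rest ! j - 1]) Ds"
    using ordered_partition_exists S(1) unfolding W_def by (metis finite_Diff)
  have finW: "finite W" using S(1) unfolding W_def by simp
  have j: "j < length Ds" using Ds part(1) by (simp add: ordered_partition_def)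
  txt \<open>Put \<open>w\<close> into the first part and \<open>w'\<close> into part \<open>j\<close>, whose size differs from \<open>s\<close>.\<close>
  have exchange: "ordered_partition S (s # rest) (insert w T # Ds[j := insert w' (Ds ! j)]) \<and>
      card (edges_in_parts E s (insert w T # Ds[j := insert w' (Ds ! j)])) =
        card (edges_within E (insert w T)) + card (edges_in_parts E s (Ds[j := insert w' (Ds ! j)]))"
    if "w \<in> {u, v}" "w' \<in> {u, v}" "w \<noteq> w'" for w w'
  proof -
    have "w' \<notin> W" "insert w T \<inter> insert w' W = {}" "insert w T \<union> insert w' W = S"
      using that uv T(1) unfolding W_def by auto
    moreover have X: "card (insert w T) = s" using that uv T finT by auto
    ultimately have P: "ordered_partition S (s # rest) (insert w T # Ds[j := insert w' (Ds ! j)])"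
      using ordered_partition_Cons_insert[OF Ds finW part(1,3)] by metis
    show ?thesis using card_edges_in_parts_Cons[OF P X E] P by blast
  qed
  have part_j: "card (insert w (Ds ! j)) \<noteq> s" if "w \<in> {u, v}" for w
    using ordered_partition_card_insert_part[OF Ds finW j, of w] that part unfolding W_def by auto
  have "edges_in_parts E s (Ds[j := insert v (Ds ! j)]) = edges_in_parts E s (Ds[j := insert u (Ds ! j)])"
    using edges_in_parts_update_other_size[OF j] part_j by blast
  moreover note exchange[of u v] exchange[of v u]
  ultimately show ?thesis
    using count[of "insert u T # Ds[j := insert v (Ds ! j)]" "insert v T # Ds[j := insert u (Ds ! j)]"]
      uv(3) by (simp add: insert_commute)
qed

lemma subgroup_sym_group_permutes: "subgroup G (sym_group n) \<Longrightarrow> g \<in> G \<Longrightarrow> g permutes {1..n}"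
  using subgroup.subset sym_group_carrier by blast

lemma subgroup_sym_group_comp: "subgroup G (sym_group n) \<Longrightarrow> g \<in> G \<Longrightarrow> h \<in> G \<Longrightarrow> g \<circ> h \<in> G"
  using subgroup.m_closed sym_group_mult by metis

lemma subgroup_sym_group_id: "subgroup G (sym_group n) \<Longrightarrow> id \<in> G"
  using subgroup.one_closed sym_group_one by metis

lemma lam_homogeneousD:
  assumes "lam_homogeneous n lam G" "ordered_partition {1..n} lam As" "ordered_partition {1..n} lam Bs"
  obtains g where "g \<in> G" "(\<lambda>A. g ` A) ` set As = set Bs"
proof -
  have "\<exists>g\<in>G. (\<lambda>A. g ` A) ` set As = set Bs"
    using assms unfolding lam_homogeneous_def ordered_partition_of_type_iff by blast
  then show ?thesis using that by blast
qed

lemma card_edges_in_parts_image_le: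
  assumes g: "inj_on g S" and E: "finite S" "E \<subseteq> Pow S" "\<forall>e\<in>E. g ` e \<in> E"
    and As: "ordered_partition S lam As" and img: "(\<lambda>A. g ` A) ` set As = set Bs"
  shows "card (edges_in_parts E s As) \<le> card (edges_in_parts E s Bs)"
proof (rule card_inj_on_le)
  show "inj_on (image g) (edges_in_parts E s As)"
    by (rule inj_on_subset[OF inj_on_image_Pow[OF g]]) (use E(2) in \<open>auto simp: edges_in_parts_def\<close>)
  show "image g ` edges_in_parts E s As \<subseteq> edges_in_parts E s Bs"
  proof
    fix e' assume "e' \<in> image g ` edges_in_parts E s As"
    then obtain e Z where ez: "e \<in> E" "Z \<in> set As" "card Z = s" "e \<subseteq> Z" "e' = g ` e"
      unfolding edges_in_parts_def by blast
    have "card (g ` Z) = s"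
      using card_image[OF inj_on_subset[OF g ordered_partition_part_subset[OF As ez(2)]]] ez(3) by simp
    moreover have "g ` Z \<in> set Bs" using img ez(2) by blast
    moreover have "g ` e \<in> E" "g ` e \<subseteq> g ` Z" using E(3) ez by auto
    ultimately show "e' \<in> edges_in_parts E s Bs"
      unfolding edges_in_parts_def using ez(5) by blast
  qed
  show "finite (edges_in_parts E s Bs)"
    using E(1,2) finite_subset[of E "Pow S"] by (simp add: edges_in_parts_def)
qed

lemma card_edges_in_parts_eq_of_lam_homogeneous:
  assumes G: "subgroup G (sym_group n)" "lam_homogeneous n lam G"
    and E: "E \<subseteq> Pow {1..n}" "\<forall>g\<in>G. \<forall>e\<in>E. g ` e \<in> E"
    and As: "ordered_partition {1..n} lam As" and Bs: "ordered_partition {1..n} lam Bs"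
  shows "card (edges_in_parts E s As) = card (edges_in_parts E s Bs)"
proof -
  have le: "card (edges_in_parts E s As) \<le> card (edges_in_parts E s Bs)"
    if P: "ordered_partition {1..n} lam As" "ordered_partition {1..n} lam Bs" for As Bs
  proof -
    obtain g where g: "g \<in> G" "(\<lambda>A. g ` A) ` set As = set Bs" using lam_homogeneousD[OF G(2) P] .
    have "inj_on g {1..n}" by (rule permutes_inj_on[OF subgroup_sym_group_permutes[OF G(1) g(1)]])
    then show ?thesis
      by (rule card_edges_in_parts_image_le[OF _ _ E(1) _ P(1) g(2)]) (use E(2) g(1) in auto)
  qed
  show ?thesis using le[OF As Bs] le[OF Bs As] by (rule antisym)
qed

lemma invariant_edge_set_complete:
  assumes G: "subgroup G (sym_group n)" "lam_homogeneous n (s # rest) G"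
    and lam: "sum_list (s # rest) = n" "j < length rest" "rest ! j \<noteq> s" "0 < rest ! j"
      "2 \<le> s" "s + 2 \<le> n"
    and E: "E \<subseteq> Pow {1..n}" "\<forall>e\<in>E. card e = 2" "\<forall>g\<in>G. \<forall>e\<in>E. g ` e \<in> E"
    and ab: "{a, b} \<in> E" "a \<noteq> b" "a \<in> {1..n}" "b \<in> {1..n}"
    and cd: "c \<noteq> d" "c \<in> {1..n}" "d \<in> {1..n}"
  shows "{c, d} \<in> E"
proof -
  have finE: "finite E" using E(1) finite_subset by blast
  have "{} \<notin> E" using E(2) by force
  have degrees: "degree_in E T u = degree_in E T v"
    if T: "T \<subseteq> {1..n}" "card T = s - 1" and uv: "u \<in> {1..n} - T" "v \<in> {1..n} - T" for T u v
  proof (cases "u = v")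
    case False
    have "card (edges_within E (insert u T)) = card (edges_within E (insert v T))"
      using card_edges_within_exchange[OF card_edges_in_parts_eq_of_lam_homogeneous[OF G E(1,3)]
          finE \<open>{} \<notin> E\<close> lam(2-4) _ _ T _ uv False] lam(1,5) by simp
    moreover have "finite T" using T(1) finite_subset by blast
    ultimately show ?thesis using card_edges_within_insert[OF _ _ E(2)] uv by simp
  qed simp
  show ?thesis
    by (rule edge_set_complete_of_equal_degrees[OF degrees _ lam(5) _ ab cd]) (use lam(6) in simp_all)
qed

lemma lam_homogeneous_imp_two_homogeneous:
  assumes G: "subgroup G (sym_group n)" "lam_homogeneous n (s # rest) G"
    and lam: "sum_list (s # rest) = n" "j < length rest" "rest ! j \<noteq> s" "0 < rest ! j"
      "2 \<le> s" "s + 2 \<le> n"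
  shows "two_homogeneous n G"
  unfolding two_homogeneous_def
proof (intro allI impI)
  fix X Y assume XY: "X \<subseteq> {1..n}" "Y \<subseteq> {1..n}" "card X = 2" "card Y = 2"
  define E where "E = (\<lambda>g. g ` X) ` G"
  have perm: "g permutes {1..n}" if "g \<in> G" for g using subgroup_sym_group_permutes[OF G(1) that] .
  have E: "E \<subseteq> Pow {1..n}" "\<forall>e\<in>E. card e = 2" "\<forall>g\<in>G. \<forall>e\<in>E. g ` e \<in> E"
  proof -
    show "E \<subseteq> Pow {1..n}" unfolding E_def using XY(1) permutes_image[OF perm] by blast
    have "card (g ` X) = 2" if "g \<in> G" for g
      using XY(1,3) card_image inj_on_subset[OF permutes_inj_on[OF perm[OF that]]] by metis
    then show "\<forall>e\<in>E. card e = 2" unfolding E_def by blast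
    have "g ` h ` X \<in> E" if "g \<in> G" "h \<in> G" for g h
      unfolding E_def image_comp using subgroup_sym_group_comp[OF G(1) that] by (rule imageI)
    then show "\<forall>g\<in>G. \<forall>e\<in>E. g ` e \<in> E" unfolding E_def by blast
  qed
  have "id ` X \<in> E" unfolding E_def using subgroup_sym_group_id[OF G(1)] by (rule imageI)
  then have "X \<in> E" by simp
  obtain a b c d where ab: "X = {a, b}" "a \<noteq> b" and cd: "Y = {c, d}" "c \<noteq> d"
    using XY(3,4) card_2_iff by metis
  have "{c, d} \<in> E"
    by (rule invariant_edge_set_complete[OF G lam E]) (use \<open>X \<in> E\<close> ab cd XY(1,2) in auto)
  then show "\<exists>g\<in>G. g ` X = Y" unfolding E_def cd by blast
qed

lemma two_homogeneousD:
  assumes "two_homogeneous n G" "a \<in> {1..n}" "b \<in> {1..n}" "c \<in> {1..n}" "d \<in> {1..n}" "a \<noteq> b" "c \<noteq> d"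
  shows "\<exists>g\<in>G. g ` {a, b} = {c, d}"
  using assms unfolding two_homogeneous_def by (metis card_2_iff empty_subsetI insert_subset)

lemma two_homogeneous_imp_perm_transitive:
  assumes G: "subgroup G (sym_group n)" and two: "two_homogeneous n G" and n: "3 \<le> n"
  shows "perm_transitive n G"
  unfolding perm_transitive_def
proof (intro ballI)
  fix x y assume x: "x \<in> {1..n}" and y: "y \<in> {1..n}"
  show "\<exists>g\<in>G. g x = y"
  proof (cases "x = y")
    case True
    then show ?thesis using subgroup_sym_group_id[OF G] by (metis id_apply)
  next
    case False
    have "card ({1..n} - {x, y}) \<noteq> 0" using x y n False by (simp add: card_Diff_subset)
    then have "{1..n} - {x, y} \<noteq> {}" by (metis card.empty)
    then obtain w where w: "w \<in> {1..n}" "w \<noteq> x" "w \<noteq> y" by blast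
    obtain h where h: "h \<in> G" "h ` {x, y} = {w, y}"
      using two_homogeneousD[OF two x y w(1) y] False w by blast
    obtain k where k: "k \<in> G" "k ` {x, w} = {y, w}"
      using two_homogeneousD[OF two x w(1) y w(1)] False w by metis
    have "h x \<in> {w, y}" "k x \<in> {y, w}" "k w \<in> {y, w}" "y \<in> k ` {x, w}"
      using h(2) k(2) by blast+
    then consider "h x = y" | "k x = y" | "h x = w" "k w = y" by auto
    then show ?thesis
      using h(1) k(1) subgroup_sym_group_comp[OF G k(1) h(1)] by cases (metis comp_apply)+
  qed
qed

lemma two_homogeneous_imp_primitive:
  assumes G: "subgroup G (sym_group n)" and two: "two_homogeneous n G" and n: "3 \<le> n"
  shows "primitive n G"
  unfolding primitive_def
proof (intro conjI allI impI)
  show "perm_transitive n G" using two_homogeneous_imp_perm_transitive[OF assms] .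
  fix B assume B: "is_block n G B"
  show "card B \<le> 1 \<or> B = {1..n}"
  proof (rule ccontr)
    assume "\<not> (card B \<le> 1 \<or> B = {1..n})"
    then have "2 \<le> card B" "B \<noteq> {1..n}" by auto
    have Bn: "B \<subseteq> {1..n}" using B by (simp add: is_block_def)
    then have "finite B" using finite_subset by blast
    then have "\<not> (\<forall>a\<in>B. \<forall>b\<in>B. a = b)" using \<open>2 \<le> card B\<close> card_le_Suc0_iff_eq by fastforce
    then obtain x y where xy: "x \<in> B" "y \<in> B" "x \<noteq> y" by blast
    obtain z where z: "z \<in> {1..n}" "z \<notin> B" using Bn \<open>B \<noteq> {1..n}\<close> by blast
    obtain g where "g \<in> G" "g ` {x, y} = {x, z}"
      using two_homogeneousD[OF two, of x y x z] xy z Bn by blast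
    then have "x \<in> g ` B" "z \<in> g ` B" "g ` B = B \<or> g ` B \<inter> B = {}"
      using B xy unfolding is_block_def by blast+
    then show False using xy(1) z(2) by blast
  qed
qed

lemma lam_homogeneous_imp_transitive_of_distinct:
  assumes G: "subgroup G (sym_group n)" and "distinct lam" "lam_homogeneous n lam G"
  shows "lam_transitive n lam G"
  unfolding lam_transitive_def ordered_partition_of_type_iff
proof (intro allI impI)
  fix As Bs assume A: "ordered_partition {1..n} lam As" and B: "ordered_partition {1..n} lam Bs"
  obtain g where g: "g \<in> G" "(\<lambda>A. g ` A) ` set As = set Bs" using lam_homogeneousD[OF assms(3) A B] .
  txt \<open>\<open>g\<close> maps parts to parts of the same size, and the sizes of the parts are distinct.\<close>
  have "g ` (As ! i) = Bs ! i" if i: "i < length lam" for i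
  proof -
    have lens: "length As = length lam" "length Bs = length lam"
      using A B by (simp_all add: ordered_partition_def)
    then have "g ` (As ! i) \<in> set Bs" using g(2) i by (metis imageI nth_mem)
    then obtain k where k: "k < length lam" "g ` (As ! i) = Bs ! k" using lens by (metis in_set_conv_nth)
    have "As ! i \<subseteq> {1..n}" using ordered_partition_part_subset[OF A] nth_mem i lens by simp
    then have "inj_on g (As ! i)"
      using permutes_inj_on[OF subgroup_sym_group_permutes[OF G g(1)]] inj_on_subset by blast
    then have "card (g ` (As ! i)) = lam ! i"
      using A i lens unfolding ordered_partition_def by (simp add: card_image)
    moreover have "card (Bs ! k) = lam ! k" using B k lens unfolding ordered_partition_def by simp
    ultimately have "k = i" using nth_eq_iff_index_eq[OF assms(2) k(1) i] k(2) by simp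
    then show ?thesis using k(2) by simp
  qed
  then show "\<exists>g\<in>G. \<forall>i<length lam. g ` (As ! i) = Bs ! i" using g(1) by blast
qed

lemma non_uniform_partition_largest_part:
  assumes "is_partition lam n" "non_uniform lam"
  obtains s rest j where "lam = s # rest" "j < length rest" "0 < rest ! j" "rest ! j < s"
proof -
  obtain x y where xy: "x \<in> set lam" "y \<in> set lam" "x \<noteq> y"
    using assms(2) unfolding non_uniform_def by blast
  then obtain s rest where lam: "lam = s # rest" by (cases lam) auto
  with xy obtain t where t: "t \<in> set rest" "t \<noteq> s" by auto
  have "0 < t" "t \<le> s" using assms(1) lam t(1) by (auto simp: is_partition_def)
  moreover obtain j where "j < length rest" "rest ! j = t" using t(1) by (auto simp: in_set_conv_nth)
  ultimately show ?thesis using that lam t(2) by simp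
qed

lemma sum_list_positive_eq_1:
  assumes "\<forall>x\<in>set xs. 0 < x" "sum_list xs = (1::nat)"
  shows "xs = [1]"
proof (cases xs)
  case (Cons a ys)
  with assms have "0 < a" "a + sum_list ys = 1" by simp_all
  then have "a = 1" "sum_list ys = 0" by linarith+
  moreover have "ys = []" using assms(1) Cons \<open>sum_list ys = 0\<close> by (cases ys) auto
  ultimately show ?thesis using Cons by simp
qed (use assms in simp)

theorem lemma4p2:
  fixes n :: nat and lam :: "nat list" and G :: "(nat \<Rightarrow> nat) set"
  assumes "is_partition lam n"
    and "non_uniform lam"
    and "subgroup G (sym_group n)"
    and "lam_homogeneous n lam G"
    and "\<not> lam_transitive n lam G"
  shows "two_homogeneous n G \<and> primitive n G"
proof -
  obtain s rest j where lam: "lam = s # rest" "j < length rest" "0 < rest ! j" "rest ! j < s"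
    using non_uniform_partition_largest_part[OF assms(1,2)] .
  have sum: "sum_list (s # rest) = n" and pos: "\<forall>x\<in>set rest. 0 < x"
    using assms(1) lam(1) by (simp_all add: is_partition_def)
  have n: "s + 2 \<le> n"
  proof (rule ccontr)
    assume "\<not> s + 2 \<le> n"
    moreover have "rest ! j \<le> sum_list rest" using lam(2) by (simp add: member_le_sum_list)
    ultimately have "sum_list rest = 1" using sum lam(3) by simp
    then have "lam = [s, 1]" using sum_list_positive_eq_1 pos lam(1) by simp
    then have "distinct lam" using lam(2-4) by auto
    then show False using lam_homogeneous_imp_transitive_of_distinct assms(3-5) by blast
  qed
  have two: "two_homogeneous n G"
    using lam_homogeneous_imp_two_homogeneous[OF assms(3) _ sum lam(2) _ lam(3) _ n] assms(4) lam
    by simp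
  moreover have "primitive n G" using two_homogeneous_imp_primitive[OF assms(3) two] n lam(3,4) by simp
  ultimately show ?thesis ..
qed

end
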